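(* For $0\le x\le 1$ let $\Lambda_x$ be the qutrit channel on $3\times 3$ complex matrices defined by $$\Lambda_x(\rho)=(1-x)\rho+\frac{x}{2}\big(\operatorname{Tr}(\rho)I_3-\rho^{T}\big),$$ where $\rho^T$ is the transpose of $\rho$. Then its one-shot classical (Holevo) capacity is $$\chi^*(\Lambda_x)=\log_2 3+\frac{x}{2}\log_2\frac{x}{2}+\Big(1-\frac{x}{2}\Big)\log_2\Big(1-\frac{x}{2}\Big).$$ Equivalently, the minimum output entropy is $\min_\rho S(\Lambda_x(\rho))=-\frac{x}{2}\log_2\frac{x}{2}-(1-\frac{x}{2})\log_2(1-\frac{x}{2})$, where the minimum is over density matrices $\rho$ on $\mathbb{C}^3$, and it is attained at the pure state $\frac{1}{\sqrt 2}(i,1,0)^T$.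
   Context: For a quantum channel $\Phi$, $\chi^*(\Phi)=\max_{\{p_i,\rho_i\}}\big[S\big(\sum_i p_i\Phi(\rho_i)\big)-\sum_i p_i S(\Phi(\rho_i))\big]$, the maximum being over finite ensembles of probabilities $p_i$ and input density matrices $\rho_i$; $S(\rho)=-\operatorname{Tr}(\rho\log_2\rho)$ is the von Neumann entropy, with the convention $0\log 0=0$. *)

theory Defs
  imports "HOL-Analysis.Analysis"
begin

type_synonym cmat3 = "complex^3^3"

definition cadj :: "complex^'n^'m \<Rightarrow> complex^'m^'n" where
  "cadj A = (\<chi> i j. cnj (A $ j $ i))"

definition unitary_mat :: "complex^'n^'n \<Rightarrow> bool" where
  "unitary_mat U \<longleftrightarrow> cadj U ** U = mat 1 \<and> U ** cadj U = mat 1"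

definition psd :: "complex^'n^'n \<Rightarrow> bool" where
  "psd A \<longleftrightarrow> cadj A = A \<and>
     (\<forall>v::complex^'n. Re (\<Sum>i\<in>UNIV. cnj (v $ i) * (A *v v) $ i) \<ge> 0)"

definition density :: "complex^'n^'n \<Rightarrow> bool" where
  "density A \<longleftrightarrow> psd A \<and> trace A = 1"

definition diag_mat :: "real^'n \<Rightarrow> complex^'n^'n" where
  "diag_mat l = (\<chi> i j. if i = j then complex_of_real (l $ i) else 0)"

definition eta :: "real \<Rightarrow> real" where
  "eta t = (if t = 0 then 0 else t * log 2 t)"

text \<open>Von Neumann entropy S(A) = - sum over eigenvalues l of l log2 l, the eigenvalues
  (with multiplicity) being read off a spectral decomposition A = U diag(l) U^*.
  The sum does not depend on the chosen decomposition.\<close>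
definition vn_entropy :: "complex^'n^'n \<Rightarrow> real" where
  "vn_entropy A = (SOME s. \<exists>U (l::real^'n). unitary_mat U \<and> A = U ** diag_mat l ** cadj U \<and>
                      s = - (\<Sum>i\<in>UNIV. eta (l $ i)))"

definition holevo_quantities :: "(complex^'n^'n \<Rightarrow> complex^'m^'m) \<Rightarrow> real set" where
  "holevo_quantities \<Phi> = {vn_entropy (\<Sum>i<n. p i *\<^sub>R \<Phi> (\<rho> i)) 
        - (\<Sum>i<n. p i * vn_entropy (\<Phi> (\<rho> i))) | (n::nat) p \<rho>.
      (\<forall>i<n. p i \<ge> 0 \<and> density (\<rho> i)) \<and> (\<Sum>i<n. p i) = 1}"

definition Lambda :: "real \<Rightarrow> cmat3 \<Rightarrow> cmat3" where
  "Lambda x \<rho> = (1 - x) *\<^sub>R \<rho> + (x / 2) *\<^sub>R (mat (trace \<rho>) - transpose \<rho>)"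

definition proj :: "complex^'n \<Rightarrow> complex^'n^'n" where
  "proj v = (\<chi> i j. v $ i * cnj (v $ j))"

definition is_max :: "real set \<Rightarrow> real \<Rightarrow> bool" where
  "is_max S v \<longleftrightarrow> v \<in> S \<and> (\<forall>y\<in>S. y \<le> v)"

definition is_min :: "real set \<Rightarrow> real \<Rightarrow> bool" where
  "is_min S v \<longleftrightarrow> v \<in> S \<and> (\<forall>y\<in>S. v \<le> y)"

end

(*
  For a density matrix rho and a unit vector u,
    <u, Lambda_x(rho) u> = (1 - x) <u, rho u> + x/2 (1 - <conj u, rho (conj u)>),
  which lies in [0, 1 - x/2]; so every eigenvalue of Lambda_x(rho) lies in [0, 1 - x/2]. Three
  probabilities bounded by m = 1 - x/2 >= 1/2 are majorized by (m, 1 - m, 0), hence by convexity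
  of t log t the output entropy is at least the binary entropy h(x/2). A pure state psi with
  psi^T psi = 0, such as (i, 1, 0)/sqrt 2, has transposed projector onto conj psi, which is
  orthogonal to psi; thus Lambda_x(proj psi) has spectrum {1 - x/2, x/2, 0} and attains the bound.
  For the capacity, the output entropy is at most log 3, and the six states (+-i e_p + e_q)/sqrt 2
  of this kind average to I/3, which Lambda_x fixes.

  The von Neumann entropy is defined through an arbitrarily chosen diagonalization; it is well
  defined because conjugate diagonalizations have the same characteristic polynomial, hence the
  same eigenvalues with multiplicities.
*)

theory Submission
  imports Defs "HOL-Computational_Algebra.Polynomial"
begin

section \<open>Complex inner product and unitary diagonalization\<close>

definition cinner :: "complex^'n \<Rightarrow> complex^'n \<Rightarrow> complex" where
  "cinner u v = (\<Sum>i\<in>UNIV. cnj (u$i) * v$i)"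

lemma of_real_scalar_mult: "complex_of_real r *s v = r *\<^sub>R v"
  unfolding vec_eq_iff by (simp add: complex_eq_iff)

lemma scaleR_complex: "r *\<^sub>R z = of_real r * (z :: complex)"
  by (rule scaleR_conv_of_real)

lemma cinner_add_left: "cinner (u + v) w = cinner u w + cinner v w"
  by (simp add: cinner_def distrib_right sum.distrib)

lemma cinner_add_right: "cinner u (v + w) = cinner u v + cinner u w"
  by (simp add: cinner_def distrib_left sum.distrib)

lemma cinner_diff_left: "cinner (u - v) w = cinner u w - cinner v w"
  by (simp add: cinner_def left_diff_distrib sum_subtractf)

lemma cinner_diff_right: "cinner u (v - w) = cinner u v - cinner u w"
  by (simp add: cinner_def right_diff_distrib sum_subtractf)

lemma cinner_scale_left: "cinner (c *s u) v = cnj c * cinner u v"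
  by (simp add: cinner_def sum_distrib_left mult.assoc)

lemma cinner_scale_right: "cinner u (c *s v) = c * cinner u v"
  by (simp add: cinner_def sum_distrib_left mult.left_commute)

lemma cinner_zero_right [simp]: "cinner u 0 = 0"
  by (simp add: cinner_def)

lemma cnj_cinner: "cnj (cinner u v) = cinner v u"
  by (simp add: cinner_def mult.commute)

lemma cinner_self: "cinner v v = of_real ((norm v)^2)"
proof -
  have "cinner v v = (\<Sum>i\<in>UNIV. of_real ((cmod (v$i))^2))"
    unfolding cinner_def by (intro sum.cong refl) (metis complex_norm_square mult.commute of_real_power)
  also have "\<dots> = of_real ((norm v)^2)"
    by (simp add: norm_vec_def L2_set_def sum_nonneg)
  finally show ?thesis .
qed

lemma cinner_self_eq_1: "cinner v v = 1 \<longleftrightarrow> norm v = 1"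
proof -
  have "cinner v v = 1 \<longleftrightarrow> (norm v)^2 = 1"
    by (metis cinner_self of_real_eq_1_iff)
  then show ?thesis using norm_ge_zero[of v] by (auto simp: power2_eq_1_iff)
qed

lemma norm_sq_eq_Re_cinner: "(norm v)^2 = Re (cinner v v)"
  by (simp add: cinner_self)

lemma cinner_sum_matrix: "cinner v ((\<Sum>i\<in>S. A i) *v v) = (\<Sum>i\<in>S. cinner v (A i *v v))"
  by (simp add: cinner_def matrix_vector_mult_def sum_distrib_left sum_distrib_right
      sum.swap[where A = S])

lemma cinner_adjoint: "cinner u (A *v v) = cinner (cadj A *v u) v"
proof -
  have "cinner u (A *v v) = (\<Sum>i\<in>UNIV. \<Sum>j\<in>UNIV. cnj (u$i) * A$i$j * v$j)"
    by (simp add: cinner_def matrix_vector_mult_def sum_distrib_left mult.assoc)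
  also have "\<dots> = (\<Sum>j\<in>UNIV. \<Sum>i\<in>UNIV. cnj (u$i) * A$i$j * v$j)"
    by (rule sum.swap)
  also have "\<dots> = cinner (cadj A *v u) v"
    unfolding cinner_def matrix_vector_mult_def cadj_def
    by (simp add: sum_distrib_left sum_distrib_right ac_simps)
  finally show ?thesis .
qed

lemma cinner_hermitian: "cadj A = A \<Longrightarrow> cinner u (A *v v) = cinner (A *v u) v"
  by (metis cinner_adjoint)

lemma cinner_columns: "cinner (column j U) (column k U) = (cadj U ** U)$j$k"
  by (simp add: cinner_def column_def cadj_def matrix_matrix_mult_def)

lemma cadj_add: "cadj (A + B) = cadj A + cadj B"
  and cadj_diff: "cadj (A - B) = cadj A - cadj B"
  and cadj_scaleR: "cadj (r *\<^sub>R A) = r *\<^sub>R cadj A"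
  and cadj_transpose: "cadj (transpose A) = transpose (cadj A)"
  and cadj_sum: "cadj (\<Sum>i\<in>S. F i) = (\<Sum>i\<in>S. cadj (F i))"
  by (simp_all add: cadj_def vec_eq_iff transpose_def)

lemma cadj_mat: "cadj (mat c :: complex^'n^'n) = mat (cnj c)"
  by (simp add: cadj_def vec_eq_iff mat_def)

lemma unitary_iff_orthonormal_columns:
  "unitary_mat U \<longleftrightarrow> (\<forall>j k. cinner (column j U) (column k U) = (if j = k then 1 else 0))"
proof -
  have "cadj U ** U = mat 1 \<longleftrightarrow> (\<forall>j k. cinner (column j U) (column k U) = (if j = k then 1 else 0))"
    by (simp add: cinner_columns vec_eq_iff mat_def)
  then show ?thesis
    unfolding unitary_mat_def using matrix_left_right_inverse by blast
qed

lemma column_matrix_mult: "column k (A ** B) = A *v column k B"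
  by (simp add: column_def matrix_vector_mult_def matrix_matrix_mult_def)

lemma column_diag_mat: "column k (U ** diag_mat l) = of_real (l$k) *s column k U"
proof -
  have "(U ** diag_mat l)$i$k = U$i$k * of_real (l$k)" for i
    by (simp add: matrix_matrix_mult_def diag_mat_def if_distrib cong: if_cong)
  then show ?thesis by (simp add: column_def vec_eq_iff mult.commute)
qed

lemma unitary_diagonalizes_iff_eigenbasis:
  assumes "unitary_mat U"
  shows "A = U ** diag_mat l ** cadj U \<longleftrightarrow> (\<forall>k. A *v column k U = of_real (l$k) *s column k U)"
proof -
  have "A = U ** diag_mat l ** cadj U \<longleftrightarrow> A ** U = U ** diag_mat l"
    using assms unfolding unitary_mat_def
    by (metis matrix_mul_assoc matrix_mul_rid)
  also have "\<dots> \<longleftrightarrow> (\<forall>k. column k (A ** U) = column k (U ** diag_mat l))"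
    by (auto simp: column_def vec_eq_iff)
  finally show ?thesis by (simp only: column_diag_mat) (simp add: column_matrix_mult)
qed

section \<open>Spectral theorem for Hermitian matrices\<close>

lemma exists_unit_orthogonal:
  fixes E :: "(complex^'n) set"
  assumes fin: "finite E" and card: "card E < CARD('n)"
  shows "\<exists>w. cinner w w = 1 \<and> (\<forall>u\<in>E. cinner u w = 0)"
proof -
  \<comment> \<open>Complex orthogonality to u is real orthogonality to u and to i u.\<close>
  define S where "S = E \<union> (\<lambda>u. \<i> *s u) ` E"
  have "card S \<le> card E + card E"
    unfolding S_def using card_Un_le card_image_le[OF fin] by (meson add_left_mono le_trans)
  then have "dim S < DIM(complex^'n)"
    using dim_le_card'[of S] fin card by (simp add: S_def)
  then obtain x :: "complex^'n" where "x \<noteq> 0" and x: "\<And>y. y \<in> span S \<Longrightarrow> orthogonal x y"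
    using orthogonal_to_subspace_exists by blast
  have "cinner u x = 0" if "u \<in> E" for u
  proof -
    have "inner x u = 0" "inner x (\<i> *s u) = 0"
      using that x by (auto simp: S_def orthogonal_def intro: span_base)
    then have "Re (cinner u x) = 0" "Im (cinner u x) = 0"
      by (simp_all add: cinner_def inner_vec_def inner_complex_def Re_sum Im_sum mult.commute)
    then show ?thesis by (simp add: complex_eq_iff)
  qed
  moreover have "cinner (of_real (1 / norm x) *s x) (of_real (1 / norm x) *s x) = 1"
    using \<open>x \<noteq> 0\<close>
    by (simp only: cinner_scale_left cinner_scale_right) (simp add: cinner_self power2_eq_square)
  ultimately show ?thesis
    by (metis cinner_scale_right mult_zero_right)
qed

lemma quadratic_nonpos_imp_linear_coeff_zero:
  fixes D C :: real
  assumes D: "0 \<le> D" and h: "\<And>t. 2 * t * D + t^2 * C \<le> 0"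
  shows "D = 0"
proof (rule ccontr)
  assume "D \<noteq> 0"
  with D have "D > 0" by simp
  define s where "s = \<bar>C\<bar> + 1"
  have "s > 0" by (simp add: s_def)
  have "2 * (D/s) * D + (D/s)^2 * C \<le> 0" by (rule h)
  then have "(D^2 / s^2) * (2 * s + C) \<le> 0"
    using \<open>s > 0\<close> by (simp add: field_simps power2_eq_square)
  moreover have "2 * s + C > 0" unfolding s_def by (simp add: abs_if)
  moreover have "D^2 / s^2 > 0" using \<open>D > 0\<close> \<open>s > 0\<close> by simp
  ultimately show False
    by (metis mult_pos_pos not_less times_divide_eq_left)
qed

lemma cinner_expand_real:
  "cinner (v + of_real t *s d) (w + of_real t *s e) =
     cinner v w + of_real t * (cinner v e + cinner d w) + of_real (t^2) * cinner d e"
  by (simp add: cinner_add_left cinner_add_right cinner_scale_left cinner_scale_right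
      power2_eq_square algebra_simps)

lemma hermitian_maximizer_is_eigenvector:
  fixes A :: "complex^'n^'n"
  defines "q \<equiv> \<lambda>z. Re (cinner z (A *v z))"
  assumes herm: "cadj A = A" and unit: "cinner v v = 1"
    and max: "\<And>z. z \<in> V \<Longrightarrow> q z \<le> q v * (norm z)^2"
    and line: "\<And>t::real. v + of_real t *s (A *v v - of_real (q v) *s v) \<in> V"
  shows "A *v v = of_real (q v) *s v"
proof -
  define lam where "lam = q v"
  define d where "d = A *v v - of_real lam *s v"
  have real: "cinner v (A *v v) = of_real lam"
    using cinner_hermitian[OF herm, of v v] cnj_cinner[of v "A *v v"]
    by (simp add: lam_def q_def complex_eq_iff)
  have dv: "cinner d v = 0"
    by (simp add: d_def cinner_diff_left cinner_scale_left unit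
        cinner_hermitian[OF herm, symmetric] real)
  have dAv: "cinner d (A *v v) = of_real ((norm d)^2)"
  proof -
    have "A *v v = d + of_real lam *s v" by (simp add: d_def)
    then show ?thesis by (simp add: cinner_add_right cinner_scale_right dv cinner_self)
  qed
  \<comment> \<open>Along the line v + t d the first-order gain is 2 t |d|^2, which must vanish at a maximum.\<close>
  have "2 * t * (norm d)^2 + t^2 * (q d - lam * (norm d)^2) \<le> 0" for t
  proof -
    define z where "z = v + of_real t *s d"
    have "cinner v (A *v d) = of_real ((norm d)^2)"
      using cinner_hermitian[OF herm, of v d] cnj_cinner[of d "A *v v"] dAv by simp
    then have "q z = lam + 2 * t * (norm d)^2 + t^2 * q d"
      by (simp add: z_def q_def real dAv cinner_expand_real matrix_vector_right_distrib
          vector_scalar_commute)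
    moreover have "(norm z)^2 = 1 + t^2 * (norm d)^2"
      using cnj_cinner[of d v]
      by (simp add: norm_sq_eq_Re_cinner z_def cinner_expand_real unit dv)
    moreover have "q z \<le> lam * (norm z)^2"
      using max line by (simp add: z_def d_def lam_def)
    ultimately show ?thesis by (simp add: algebra_simps)
  qed
  then have "(norm d)^2 = 0"
    by (intro quadratic_nonpos_imp_linear_coeff_zero) simp_all
  then show ?thesis by (simp add: d_def lam_def)
qed

lemma quadratic_form_attains_max_on_cone:
  fixes A :: "complex^'n^'n" and V :: "(complex^'n) set"
  defines "q \<equiv> \<lambda>z. Re (cinner z (A *v z))"
  assumes "closed V" and scale: "\<And>z c. z \<in> V \<Longrightarrow> c *s z \<in> V" and "z\<^sub>0 \<in> V" "z\<^sub>0 \<noteq> 0"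
  shows "\<exists>v\<in>V. norm v = 1 \<and> (\<forall>z\<in>V. q z \<le> q v * (norm z)^2)"
proof -
  define K where "K = sphere 0 1 \<inter> V"
  have unit_in_K: "of_real (1 / norm z) *s z \<in> K" if "z \<in> V" "z \<noteq> 0" for z
  proof -
    have "norm (of_real (1 / norm z) *s z) = 1"
      unfolding of_real_scalar_mult using that by simp
    then show ?thesis using scale[OF \<open>z \<in> V\<close>] by (simp add: K_def)
  qed
  have "compact K"
    using \<open>closed V\<close> by (simp add: K_def compact_Int_closed)
  moreover have "K \<noteq> {}"
    using unit_in_K[OF \<open>z\<^sub>0 \<in> V\<close> \<open>z\<^sub>0 \<noteq> 0\<close>] by blast
  moreover have "continuous_on K q"
    unfolding q_def cinner_def by (intro continuous_intros)
  ultimately obtain v where "v \<in> K" and v_max: "\<forall>z\<in>K. q z \<le> q v"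
    using continuous_attains_sup[of K q] by blast
  have "q z \<le> q v * (norm z)^2" if "z \<in> V" for z
  proof (cases "z = 0")
    case False
    have "q (of_real (1 / norm z) *s z) = (1 / norm z)^2 * q z"
      by (simp add: q_def vector_scalar_commute cinner_scale_left cinner_scale_right
          power2_eq_square)
    then have "(1 / norm z)^2 * q z \<le> q v"
      using v_max unit_in_K[OF that False] by metis
    then show ?thesis
      using False by (simp add: field_simps)
  qed (simp add: q_def)
  then show ?thesis
    using \<open>v \<in> K\<close> by (auto simp: K_def)
qed

lemma hermitian_eigenvector_orthogonal:
  fixes A :: "complex^'n^'n" and E :: "(complex^'n) set"
  assumes herm: "cadj A = A" and fin: "finite E" and card: "card E < CARD('n)"
    and eig: "\<And>u. u \<in> E \<Longrightarrow> \<exists>\<mu>. A *v u = \<mu> *s u"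
  shows "\<exists>v \<mu>. cinner v v = 1 \<and> (\<forall>u\<in>E. cinner u v = 0) \<and> A *v v = of_real \<mu> *s v"
proof -
  define V where "V = {z. \<forall>u\<in>E. cinner u z = 0}"
  have V_lincomb: "z + c *s w \<in> V" if "z \<in> V" "w \<in> V" for z w c
    using that by (simp add: V_def cinner_add_right cinner_scale_right)
  have V_scale: "c *s z \<in> V" if "z \<in> V" for z c
    using that by (simp add: V_def cinner_scale_right)
  have V_invariant: "A *v z \<in> V" if "z \<in> V" for z
  proof -
    have "cinner u (A *v z) = 0" if "u \<in> E" for u
    proof -
      obtain \<mu> where "A *v u = \<mu> *s u" using eig \<open>u \<in> E\<close> by blast
      then show ?thesis
        using \<open>z \<in> V\<close> \<open>u \<in> E\<close> by (simp add: cinner_hermitian[OF herm] cinner_scale_left V_def)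
    qed
    then show ?thesis by (simp add: V_def)
  qed
  have "closed V"
  proof -
    have "closed {z. cinner u z = 0}" for u :: "complex^'n"
      unfolding cinner_def by (intro closed_Collect_eq continuous_intros)
    then show ?thesis by (auto simp: V_def Collect_ball_eq intro: closed_INT)
  qed
  moreover obtain z\<^sub>0 where "z\<^sub>0 \<in> V" "z\<^sub>0 \<noteq> 0"
    using exists_unit_orthogonal[OF fin card] by (force simp: V_def)
  ultimately obtain v where "v \<in> V" and unit: "cinner v v = 1"
    and max: "\<forall>z\<in>V. Re (cinner z (A *v z)) \<le> Re (cinner v (A *v v)) * (norm z)^2"
    using quadratic_form_attains_max_on_cone[of V z\<^sub>0 A] V_scale by (auto simp: cinner_self_eq_1)
  have d: "A *v v - of_real (Re (cinner v (A *v v))) *s v \<in> V"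
    using V_lincomb[OF V_invariant[OF \<open>v \<in> V\<close>] \<open>v \<in> V\<close>, of "- of_real (Re (cinner v (A *v v)))"]
    by simp
  have "A *v v = of_real (Re (cinner v (A *v v))) *s v"
    by (rule hermitian_maximizer_is_eigenvector[OF herm unit, of V])
      (use max V_lincomb[OF \<open>v \<in> V\<close> d] in auto)
  then show ?thesis using unit \<open>v \<in> V\<close> by (auto simp: V_def)
qed

lemma hermitian_orthonormal_eigenbasis:
  fixes A :: "complex^'n^'n"
  assumes herm: "cadj A = A"
  shows "\<exists>(f :: 'n \<Rightarrow> complex^'n) l. (\<forall>j k. cinner (f j) (f k) = (if j = k then 1 else 0)) \<and>
               (\<forall>k. A *v f k = of_real (l k) *s f k)"
proof -
  have "\<exists>f l. (\<forall>j\<in>S. \<forall>k\<in>S. cinner (f j) (f k) = (if j = k then 1 else 0)) \<and>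
               (\<forall>k\<in>S. A *v f k = of_real (l k) *s f k)" for S :: "'n set"
    using finite[of S]
  proof (induction S rule: finite_induct)
    case (insert a S)
    then obtain f l where orth: "\<forall>j\<in>S. \<forall>k\<in>S. cinner (f j) (f k) = (if j = k then 1 else 0)"
      and eig: "\<forall>k\<in>S. A *v f k = of_real (l k) *s f k" by blast
    have "S \<subset> UNIV" using \<open>a \<notin> S\<close> by blast
    then have card: "card (f ` S) < CARD('n)"
      using card_image_le[OF \<open>finite S\<close>, of f] psubset_card_mono[of UNIV S] by simp
    have "\<exists>\<mu>. A *v u = \<mu> *s u" if "u \<in> f ` S" for u
      using that eig by auto
    then obtain v \<mu> where "cinner v v = 1" and v_orth: "\<forall>u\<in>f ` S. cinner u v = 0"
      and "A *v v = of_real \<mu> *s v"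
      using hermitian_eigenvector_orthogonal[OF herm finite_imageI[OF \<open>finite S\<close>] card] by blast
    moreover have "cinner v (f k) = 0" if "k \<in> S" for k
      using v_orth that cnj_cinner[of "f k" v] by simp
    ultimately have "cinner ((f(a := v)) j) ((f(a := v)) k) = (if j = k then 1 else 0)"
      if "j \<in> insert a S" "k \<in> insert a S" for j k
      using that orth v_orth \<open>a \<notin> S\<close> by (cases "j = a"; cases "k = a") auto
    then show ?case
      using eig \<open>A *v v = of_real \<mu> *s v\<close> \<open>a \<notin> S\<close>
      by (intro exI[of _ "f(a := v)"] exI[of _ "l(a := \<mu>)"]) simp
  qed simp
  from this[of UNIV] show ?thesis by simp
qed

lemma unitary_diagonalization_of_eigenbasis:
  fixes A :: "complex^'n^'n" and f :: "'n \<Rightarrow> complex^'n"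
  assumes "\<forall>j k. cinner (f j) (f k) = (if j = k then 1 else 0)"
    and "\<forall>k. A *v f k = of_real (l$k) *s f k"
  shows "\<exists>U. unitary_mat U \<and> A = U ** diag_mat l ** cadj U"
proof -
  define U where "U = transpose (\<chi> j. f j)"
  have col: "column k U = f k" for k by (simp add: U_def row_def)
  have "unitary_mat U" using assms(1) by (simp add: unitary_iff_orthonormal_columns col)
  moreover have "A = U ** diag_mat l ** cadj U"
    using assms(2) by (simp add: unitary_diagonalizes_iff_eigenbasis[OF \<open>unitary_mat U\<close>] col)
  ultimately show ?thesis by blast
qed

theorem hermitian_spectral_theorem:
  fixes A :: "complex^'n^'n"
  assumes "cadj A = A"
  shows "\<exists>U l. unitary_mat U \<and> A = U ** diag_mat l ** cadj U"
proof -
  obtain f :: "'n \<Rightarrow> complex^'n" and l where "\<forall>j k. cinner (f j) (f k) = (if j = k then 1 else 0)"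
    and "\<forall>k. A *v f k = of_real (l k) *s f k"
    using hermitian_orthonormal_eigenbasis[OF assms] by blast
  then show ?thesis
    using unitary_diagonalization_of_eigenbasis[of f A "\<chi> k. l k"] by auto
qed

section \<open>Uniqueness of the spectrum\<close>

lemma matrix_diff_ldistrib: "A ** (B - C) = A ** B - A ** (C :: 'a::ring_1^'n^'m)"
  by (simp add: matrix_matrix_mult_def vec_eq_iff right_diff_distrib sum_subtractf)

lemma matrix_diff_rdistrib: "(B - C) ** (A :: 'a::ring_1^'n^'m) = B ** A - C ** A"
  by (simp add: matrix_matrix_mult_def vec_eq_iff left_diff_distrib sum_subtractf)

lemma matrix_mul_mat_commute: "A ** mat c = mat c ** (A :: 'a::comm_semiring_1^'n^'n)"
  unfolding matrix_matrix_mult_def mat_def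
  by (auto simp: vec_eq_iff if_distrib if_distribR sum.delta'[OF finite] mult.commute cong: if_cong)

lemma det_unitary_conj:
  assumes "unitary_mat U"
  shows "det (U ** B ** cadj U) = det B"
proof -
  have "det U * det (cadj U) = 1"
    using assms by (simp add: unitary_mat_def flip: det_mul)
  then show ?thesis by (simp add: det_mul)
qed

lemma charpoly_unitary_diagonalization:
  assumes "unitary_mat U"
  shows "det (mat t - U ** diag_mat l ** cadj U) = (\<Prod>i\<in>UNIV. t - of_real (l$i))"
proof -
  have "U ** mat t ** cadj U = mat t ** (U ** cadj U)"
    by (simp add: matrix_mul_mat_commute matrix_mul_assoc)
  then have "U ** mat t ** cadj U = mat t"
    using assms by (simp add: unitary_mat_def)
  then have "mat t - U ** diag_mat l ** cadj U = U ** (mat t - diag_mat l) ** cadj U"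
    by (simp add: matrix_diff_ldistrib matrix_diff_rdistrib)
  also have "det \<dots> = det (mat t - diag_mat l)"
    by (rule det_unitary_conj[OF assms])
  also have "\<dots> = (\<Prod>i\<in>UNIV. t - of_real (l$i))"
    by (subst det_diagonal) (auto simp: mat_def diag_mat_def)
  finally show ?thesis .
qed

lemma order_prod_linear_factors:
  fixes a :: "'i \<Rightarrow> 'a::idom"
  assumes "finite I"
  shows "order c (\<Prod>i\<in>I. [:- a i, 1:]) = card {i\<in>I. a i = c}"
  using assms
proof (induction I rule: finite_induct)
  case (insert j I)
  have "order c [:- a j, 1:] = (if a j = c then 1 else 0)"
    using order_power_n_n[of c 1] by (auto intro: order_0I)
  moreover have "order c (\<Prod>i\<in>insert j I. [:- a i, 1:]) =
      order c [:- a j, 1:] + order c (\<Prod>i\<in>I. [:- a i, 1:])"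
    using insert.hyps
    by (simp only: prod.insert[OF insert.hyps])
      (rule order_mult, simp only: mult_eq_0_iff prod_zero_iff, simp)
  moreover have "{i \<in> insert j I. a i = c} =
      (if a j = c then insert j {i\<in>I. a i = c} else {i\<in>I. a i = c})"
    by auto
  ultimately show ?case
    using insert by simp
qed simp

lemma unitary_diagonalization_multiplicity:
  fixes l m :: "real^'n"
  assumes U: "unitary_mat U" and V: "unitary_mat V"
    and eq: "U ** diag_mat l ** cadj U = V ** diag_mat m ** cadj V"
  shows "card {i. l$i = r} = card {i. m$i = r}"
proof -
  define p where "p k = (\<Prod>i\<in>UNIV. [:- complex_of_real (k$i), 1:])" for k :: "real^'n"
  have "poly (p l) t = poly (p m) t" for t :: complex
    using charpoly_unitary_diagonalization[OF U, of t l] charpoly_unitary_diagonalization[OF V, of t m]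
    by (simp add: p_def poly_prod eq)
  then have "p l = p m" by (simp add: poly_eq_poly_eq_iff[symmetric] fun_eq_iff)
  then show ?thesis
    using order_prod_linear_factors[where I=UNIV and a="\<lambda>i. complex_of_real (l$i)" and c="of_real r"]
      order_prod_linear_factors[where I=UNIV and a="\<lambda>i. complex_of_real (m$i)" and c="of_real r"]
    by (simp add: p_def)
qed

lemma sum_eq_if_fibres_card_eq:
  fixes a b :: "'i::finite \<Rightarrow> 'a" and f :: "'a \<Rightarrow> 'b::comm_semiring_1"
  assumes "\<And>r. card {i. a i = r} = card {i. b i = r}"
  shows "(\<Sum>i\<in>UNIV. f (a i)) = (\<Sum>i\<in>UNIV. f (b i))"
proof -
  define T where "T = range a \<union> range b"
  have "(\<Sum>i\<in>UNIV. f (c i)) = (\<Sum>r\<in>T. of_nat (card {i. c i = r}) * f r)"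
    if "range c \<subseteq> T" for c :: "'i \<Rightarrow> 'a"
    using sum.group[of UNIV T c "\<lambda>i. f (c i)", symmetric] that by (simp add: T_def)
  then show ?thesis using assms by (simp add: T_def)
qed

lemma vn_entropy_eq:
  fixes A :: "complex^'n^'n" and l :: "real^'n"
  assumes U: "unitary_mat U" and A: "A = U ** diag_mat l ** cadj U"
  shows "vn_entropy A = - (\<Sum>i\<in>UNIV. eta (l$i))"
proof -
  have "\<exists>s U' (l'::real^'n). unitary_mat U' \<and> A = U' ** diag_mat l' ** cadj U' \<and>
      s = - (\<Sum>i\<in>UNIV. eta (l'$i))"
    using U A by blast
  from someI_ex[OF this] obtain U' and l' :: "real^'n" where U': "unitary_mat U'"
    and A': "A = U' ** diag_mat l' ** cadj U'" and S: "vn_entropy A = - (\<Sum>i\<in>UNIV. eta (l'$i))"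
    unfolding vn_entropy_def by blast
  have "card {i. l'$i = r} = card {i. l$i = r}" for r
    using unitary_diagonalization_multiplicity[OF U' U] A A' by simp
  then show ?thesis
    using sum_eq_if_fibres_card_eq[of "\<lambda>i. l'$i" "\<lambda>i. l$i" eta] S by simp
qed

section \<open>Density matrices\<close>

lemma scaleR_matrix_vector_mult: "(r *\<^sub>R A) *v v = r *\<^sub>R (A *v v :: complex^'n)"
  by (simp add: matrix_vector_mult_def vec_eq_iff scaleR_sum_right)

lemma cinner_scaleR_right: "cinner u (r *\<^sub>R v) = of_real r * cinner u v"
  by (simp add: cinner_scale_right flip: of_real_scalar_mult)

lemma psd_iff_quadratic_form: "psd A \<longleftrightarrow> cadj A = A \<and> (\<forall>v. 0 \<le> Re (cinner v (A *v v)))"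
  by (simp add: psd_def cinner_def)

lemma trace_sum: "trace (\<Sum>i\<in>S. F i) = (\<Sum>i\<in>S. trace (F i))"
  by (simp add: trace_def sum.swap[where A = S])

lemma trace_scaleR: "trace (r *\<^sub>R A) = of_real r * trace (A :: complex^'n^'n)"
  by (simp add: trace_def sum_distrib_left) (simp add: scaleR_conv_of_real)

lemma unitary_diagonalization_eigenvalue:
  assumes U: "unitary_mat U" and A: "A = U ** diag_mat l ** cadj U"
  shows "norm (column k U) = 1" and "l$k = Re (cinner (column k U) (A *v column k U))"
proof -
  have unit: "cinner (column k U) (column k U) = 1"
    using U by (simp add: unitary_iff_orthonormal_columns)
  then show "norm (column k U) = 1" by (simp add: cinner_self_eq_1)
  show "l$k = Re (cinner (column k U) (A *v column k U))"
    using A unit by (simp add: unitary_diagonalizes_iff_eigenbasis[OF U] cinner_scale_right)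
qed

lemma trace_unitary_diagonalization:
  assumes "unitary_mat U"
  shows "trace (U ** diag_mat l ** cadj U) = of_real (\<Sum>i\<in>UNIV. l$i)"
proof -
  have "trace (U ** diag_mat l ** cadj U) = trace (diag_mat l ** cadj U ** U)"
    by (metis matrix_mul_assoc trace_mul_sym)
  also have "\<dots> = trace (diag_mat l)"
    using assms by (simp add: unitary_mat_def flip: matrix_mul_assoc)
  finally show ?thesis by (simp add: trace_def diag_mat_def)
qed

lemma density_eigenvalues:
  assumes "density A" and U: "unitary_mat U" and A: "A = U ** diag_mat l ** cadj U"
  shows "0 \<le> l$k" and "(\<Sum>i\<in>UNIV. l$i) = 1"
proof -
  show "0 \<le> l$k"
    using assms unitary_diagonalization_eigenvalue(2)[OF U A]
    by (simp add: density_def psd_iff_quadratic_form)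
  show "(\<Sum>i\<in>UNIV. l$i) = 1"
    using assms trace_unitary_diagonalization[OF U, of l] by (metis density_def of_real_eq_1_iff)
qed

lemma quadratic_form_unitary_diagonalization:
  assumes U: "unitary_mat U"
  shows "Re (cinner w ((U ** diag_mat l ** cadj U) *v w)) =
           (\<Sum>i\<in>UNIV. l$i * (cmod ((cadj U *v w)$i))^2)"
proof -
  define c where "c = cadj U *v w"
  have "cinner w ((U ** diag_mat l ** cadj U) *v w) = cinner c (diag_mat l *v c)"
    by (simp add: c_def cinner_adjoint flip: matrix_vector_mul_assoc)
  also have "\<dots> = (\<Sum>i\<in>UNIV. of_real (l$i) * (cnj (c$i) * c$i))"
    unfolding cinner_def matrix_vector_mult_def diag_mat_def
    by (simp add: if_distrib if_distribR sum.delta cong: if_cong) (simp add: ac_simps)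
  finally show ?thesis
    by (simp add: c_def Re_sum cmod_power2) (simp add: power2_eq_square)
qed

lemma norm_unitary_adj_mult:
  assumes "unitary_mat U"
  shows "norm (cadj U *v w) = norm w"
proof -
  have "cinner (cadj U *v w) (cadj U *v w) = cinner w w"
    using assms by (simp add: cinner_adjoint[symmetric] matrix_vector_mul_assoc unitary_mat_def)
  then have "(norm (cadj U *v w))^2 = (norm w)^2" by (simp add: norm_sq_eq_Re_cinner)
  then show ?thesis by (metis norm_ge_zero power2_eq_iff_nonneg)
qed

lemma density_quadratic_form_le:
  assumes "density \<rho>"
  shows "Re (cinner w (\<rho> *v w)) \<le> (norm w)^2"
proof -
  have "cadj \<rho> = \<rho>" using assms by (simp add: density_def psd_def)
  then obtain U l where U: "unitary_mat U" and \<rho>: "\<rho> = U ** diag_mat l ** cadj U"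
    using hermitian_spectral_theorem by blast
  have "l$i \<le> 1" for i
    using density_eigenvalues[OF assms U \<rho>] member_le_sum[of i UNIV "\<lambda>i. l$i"] by simp
  then have "(\<Sum>i\<in>UNIV. l$i * (cmod ((cadj U *v w)$i))^2) \<le> (\<Sum>i\<in>UNIV. (cmod ((cadj U *v w)$i))^2)"
    using density_eigenvalues(1)[OF assms U \<rho>] by (intro sum_mono mult_left_le_one_le) auto
  also have "\<dots> = (norm w)^2"
    using norm_unitary_adj_mult[OF U, of w] by (simp add: norm_vec_def L2_set_def sum_nonneg)
  finally show ?thesis
    by (simp add: \<rho> quadratic_form_unitary_diagonalization[OF U])
qed

lemma density_convex_combination:
  assumes "\<forall>i\<in>S. 0 \<le> p i \<and> density (\<rho> i)" and "(\<Sum>i\<in>S. p i) = 1"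
  shows "density (\<Sum>i\<in>S. p i *\<^sub>R \<rho> i)"
proof -
  have "cadj (\<Sum>i\<in>S. p i *\<^sub>R \<rho> i) = (\<Sum>i\<in>S. p i *\<^sub>R \<rho> i)"
    using assms(1) by (simp add: cadj_sum cadj_scaleR density_def psd_def)
  moreover have "0 \<le> Re (cinner v ((\<Sum>i\<in>S. p i *\<^sub>R \<rho> i) *v v))" for v
    using assms(1) unfolding cinner_sum_matrix
    by (auto simp: Re_sum scaleR_matrix_vector_mult cinner_scaleR_right density_def
        psd_iff_quadratic_form intro!: sum_nonneg)
  moreover have "trace (\<Sum>i\<in>S. p i *\<^sub>R \<rho> i) = 1"
    using assms by (simp add: trace_sum trace_scaleR density_def flip: of_real_sum)
  ultimately show ?thesis by (simp add: density_def psd_iff_quadratic_form)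
qed

section \<open>Entropy bounds and Holevo quantities\<close>

lemma eta_eq: "eta t = t * log 2 t"
  by (simp add: eta_def)

lemma convex_on_eta: "convex_on {0<..} eta"
  unfolding eta_eq
proof (rule convex_on_realI[where f' = "\<lambda>t. log 2 t + 1 / ln 2"])
  fix t :: real assume "t \<in> {0<..}"
  then show "((\<lambda>t. t * log 2 t) has_real_derivative (log 2 t + 1 / ln 2)) (at t)"
    by (auto intro!: derivative_eq_intros)
qed auto

lemma eta_superadditive:
  assumes "0 \<le> a" and "0 \<le> b"
  shows "eta a + eta b \<le> eta (a + b)"
proof -
  have "x * log 2 x \<le> x * log 2 (x + y)" if "0 \<le> x" "0 \<le> y" for x y :: real
  proof (cases "x = 0")
    case False
    with that have "log 2 x \<le> log 2 (x + y)" by simp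
    with that show ?thesis by (simp add: mult_left_mono)
  qed simp
  from this[OF assms] this[OF assms(2,1)] show ?thesis
    by (simp add: eta_eq add.commute distrib_right)
qed

lemma eta_add_le_spread:
  fixes u a b v :: real
  assumes "0 \<le> u" "u \<le> a" "u \<le> b" "a \<le> v" "b \<le> v" and sum: "u + v = a + b"
  shows "eta a + eta b \<le> eta u + eta v"
proof (cases "u = 0")
  case True
  then show ?thesis using eta_superadditive[of a b] assms by (simp add: eta_def)
next
  case False
  show ?thesis
  proof (cases "u = v")
    case True
    then have "a = u" "b = u" using assms by linarith+
    then show ?thesis using True by simp
  next
    case False
    with assms \<open>u \<noteq> 0\<close> have "u \<in> {0<..}" "v \<in> {0<..}" "u < v" by auto
    define \<theta> where "\<theta> = (b - u) / (v - u)"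
    have \<theta>: "0 \<le> \<theta>" "\<theta> \<le> 1" using assms \<open>u < v\<close> by (auto simp: \<theta>_def field_simps)
    have "\<theta> * (v - u) = b - u"
      using \<open>u < v\<close> by (simp add: \<theta>_def)
    then have "\<theta> * v - \<theta> * u = b - u"
      by (simp add: right_diff_distrib)
    moreover have "(1 - \<theta>) * u + \<theta> * v = u + (\<theta> * v - \<theta> * u)"
      and "\<theta> * u + (1 - \<theta>) * v = v - (\<theta> * v - \<theta> * u)"
      by (simp_all add: algebra_simps)
    ultimately have b: "b = (1 - \<theta>) * u + \<theta> * v"
      and a: "a = \<theta> * u + (1 - \<theta>) * v"
      using sum by linarith+
    have "eta b \<le> (1 - \<theta>) * eta u + \<theta> * eta v"
      using convex_onD[OF convex_on_eta \<theta> \<open>u \<in> {0<..}\<close> \<open>v \<in> {0<..}\<close>] by (simp add: b)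
    moreover have "eta a \<le> \<theta> * eta u + (1 - \<theta>) * eta v"
      using convex_onD[OF convex_on_eta _ _ \<open>u \<in> {0<..}\<close> \<open>v \<in> {0<..}\<close>, of "1 - \<theta>"] \<theta>
      by (simp add: a)
    ultimately show ?thesis by (simp add: algebra_simps)
  qed
qed

lemma eta_sum3_le:
  fixes p1 p2 p3 m :: real
  assumes "0 \<le> p1" "0 \<le> p2" "0 \<le> p3" "p1 \<le> m" "p2 \<le> m" "p3 \<le> m" "1/2 \<le> m" "m \<le> 1"
    and "p1 + p2 + p3 = 1"
  shows "eta p1 + eta p2 + eta p3 \<le> eta m + eta (1 - m)"
  \<comment> \<open>Two spreading steps turn (p1, p2, p3) into (m, 1 - m, 0), which majorizes it.\<close>
proof (cases "p1 + p3 \<le> m")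
  case True
  have "eta p1 + eta p3 \<le> eta 0 + eta (p1 + p3)"
    by (rule eta_add_le_spread) (use assms in auto)
  moreover have "eta (p1 + p3) + eta p2 \<le> eta (1 - m) + eta m"
    by (rule eta_add_le_spread) (use assms True in auto)
  ultimately show ?thesis by (simp add: eta_def)
next
  case False
  have "eta p1 + eta p3 \<le> eta (p1 + p3 - m) + eta m"
    by (rule eta_add_le_spread) (use assms False in auto)
  moreover have "eta p2 + eta (p1 + p3 - m) \<le> eta 0 + eta (1 - m)"
    by (rule eta_add_le_spread) (use assms False in auto)
  ultimately show ?thesis by (simp add: eta_def)
qed

lemma neg_eta_le:
  assumes "0 \<le> t" and "0 < c"
  shows "- eta t \<le> t * log 2 c + (1 / c - t) / ln 2"
  \<comment> \<open>The tangent of the concave function -t log t at t = 1/c.\<close>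
proof (cases "t = 0")
  case False
  with assms have "t > 0" by simp
  have "t * ln (1 / (c * t)) \<le> t * (1 / (c * t) - 1)"
    using \<open>t > 0\<close> assms by (intro mult_left_mono ln_le_minus_one) auto
  also have "\<dots> = 1 / c - t" using \<open>t > 0\<close> by (simp add: field_simps)
  finally have "- (t * ln t) - t * ln c \<le> 1 / c - t"
    using \<open>t > 0\<close> assms by (simp add: ln_div ln_mult algebra_simps)
  then have "(- (t * ln t) - t * ln c) / ln 2 \<le> (1 / c - t) / ln 2"
    by (simp add: divide_right_mono)
  then show ?thesis
    by (simp add: eta_eq log_def diff_divide_distrib)
qed (use assms in \<open>simp add: eta_def\<close>)

lemma entropy_le_log_card:
  assumes "finite S" and "S \<noteq> {}" and "\<forall>i\<in>S. 0 \<le> p i" and "(\<Sum>i\<in>S. p i) = 1"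
  shows "- (\<Sum>i\<in>S. eta (p i)) \<le> log 2 (card S)"
proof -
  define n where "n = real (card S)"
  have "n > 0" using assms by (simp add: n_def card_gt_0_iff)
  have "- (\<Sum>i\<in>S. eta (p i)) = (\<Sum>i\<in>S. - eta (p i))"
    by (simp add: sum_negf)
  also have "\<dots> \<le> (\<Sum>i\<in>S. p i * log 2 n + (1 / n - p i) / ln 2)"
    using assms(3) neg_eta_le[OF _ \<open>n > 0\<close>] by (intro sum_mono) auto
  also have "\<dots> = (\<Sum>i\<in>S. p i) * log 2 n + (n * (1 / n) - (\<Sum>i\<in>S. p i)) / ln 2"
    by (simp add: sum.distrib sum_distrib_right sum_divide_distrib[symmetric] sum_subtractf n_def)
  also have "\<dots> = log 2 n"
    using assms(4) \<open>n > 0\<close> by simp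
  finally show ?thesis by (simp add: n_def)
qed

lemma vn_entropy_le_log_dim:
  fixes A :: "complex^'n^'n"
  assumes "density A"
  shows "vn_entropy A \<le> log 2 CARD('n)"
proof -
  have "cadj A = A" using assms by (simp add: density_def psd_def)
  then obtain U l where U: "unitary_mat U" and A: "A = U ** diag_mat l ** cadj U"
    using hermitian_spectral_theorem by blast
  show ?thesis
    using entropy_le_log_card[of UNIV "\<lambda>i. l$i"] density_eigenvalues[OF assms U A]
    by (simp add: vn_entropy_eq[OF U A])
qed

lemma vn_entropy_maximally_mixed:
  "vn_entropy ((1 / CARD('n)) *\<^sub>R mat 1 :: complex^'n^'n) = log 2 CARD('n)"
proof -
  define n where "n = real CARD('n)"
  have "unitary_mat (mat 1 :: complex^'n^'n)" by (simp add: unitary_mat_def cadj_mat)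
  moreover have "(1 / n) *\<^sub>R mat 1 = mat 1 ** diag_mat (\<chi> i. 1 / n) ** cadj (mat 1 :: complex^'n^'n)"
    by (simp add: cadj_mat) (auto simp: diag_mat_def mat_def vec_eq_iff of_real_def)
  ultimately have "vn_entropy ((1 / n) *\<^sub>R mat 1 :: complex^'n^'n) = - n * eta (1 / n)"
    by (simp add: vn_entropy_eq n_def)
  also have "\<dots> = log 2 n"
    by (simp add: eta_eq n_def log_divide)
  finally show ?thesis by (simp add: n_def)
qed

lemma holevo_quantity_le:
  fixes \<Phi> :: "complex^'n^'n \<Rightarrow> complex^'m^'m"
  assumes density: "\<And>\<rho>. density \<rho> \<Longrightarrow> density (\<Phi> \<rho>)"
    and entropy: "\<And>\<rho>. density \<rho> \<Longrightarrow> h \<le> vn_entropy (\<Phi> \<rho>)"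
    and "q \<in> holevo_quantities \<Phi>"
  shows "q \<le> log 2 CARD('m) - h"
proof -
  obtain n :: nat and p \<rho> where q: "q = vn_entropy (\<Sum>i<n. p i *\<^sub>R \<Phi> (\<rho> i)) - (\<Sum>i<n. p i * vn_entropy (\<Phi> (\<rho> i)))"
    and ens: "\<forall>i<n. 0 \<le> p i \<and> density (\<rho> i)" and p: "(\<Sum>i<n. p i) = 1"
    using assms(3) unfolding holevo_quantities_def by blast
  have "vn_entropy (\<Sum>i<n. p i *\<^sub>R \<Phi> (\<rho> i)) \<le> log 2 CARD('m)"
    using ens p density by (intro vn_entropy_le_log_dim density_convex_combination) auto
  moreover have "h = (\<Sum>i<n. p i * h)"
    using p by (simp flip: sum_distrib_right)
  moreover have "(\<Sum>i<n. p i * h) \<le> (\<Sum>i<n. p i * vn_entropy (\<Phi> (\<rho> i)))"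
    using ens entropy by (intro sum_mono mult_left_mono) auto
  ultimately show ?thesis using q by linarith
qed

lemma holevo_quantity_uniform_ensemble:
  fixes \<Phi> :: "complex^'n^'n \<Rightarrow> complex^'m^'m" and n :: nat
  assumes "0 < n" and ens: "\<And>i. i < n \<Longrightarrow> density (\<rho> i) \<and> vn_entropy (\<Phi> (\<rho> i)) = h"
    and avg: "(\<Sum>i<n. (1 / n) *\<^sub>R \<Phi> (\<rho> i)) = (1 / CARD('m)) *\<^sub>R mat 1"
  shows "log 2 CARD('m) - h \<in> holevo_quantities \<Phi>"
proof -
  have "(\<Sum>i<n. 1 / real n * vn_entropy (\<Phi> (\<rho> i))) = h"
    using ens \<open>0 < n\<close> by simp
  then have "log 2 CARD('m) - h = vn_entropy (\<Sum>i<n. (1 / n) *\<^sub>R \<Phi> (\<rho> i))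
      - (\<Sum>i<n. 1 / real n * vn_entropy (\<Phi> (\<rho> i)))"
    by (simp add: avg vn_entropy_maximally_mixed)
  moreover have "(\<forall>i<n. 0 \<le> 1 / real n \<and> density (\<rho> i)) \<and> (\<Sum>i<n. 1 / real n) = 1"
    using ens \<open>0 < n\<close> by simp
  ultimately show ?thesis
    unfolding holevo_quantities_def mem_Collect_eq
    by (intro exI[of _ n] exI[of _ "\<lambda>_. 1 / real n"] exI[of _ \<rho>]) simp
qed

section \<open>Pure states and the qutrit channel\<close>

definition vcnj :: "complex^'n \<Rightarrow> complex^'n" where
  "vcnj v = (\<chi> i. cnj (v$i))"

lemma norm_vcnj: "norm (vcnj v) = norm v"
  by (simp add: norm_vec_def vcnj_def)

lemma cinner_transpose: "cinner u (transpose M *v u) = cinner (vcnj u) (M *v vcnj u)"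
proof -
  have "cinner u (transpose M *v u) = (\<Sum>i\<in>UNIV. \<Sum>j\<in>UNIV. cnj (u$i) * M$j$i * u$j)"
    by (simp add: cinner_def matrix_vector_mult_def transpose_def sum_distrib_left mult.assoc)
  also have "\<dots> = (\<Sum>j\<in>UNIV. \<Sum>i\<in>UNIV. cnj (u$i) * M$j$i * u$j)"
    by (rule sum.swap)
  also have "\<dots> = cinner (vcnj u) (M *v vcnj u)"
    by (simp add: cinner_def matrix_vector_mult_def vcnj_def sum_distrib_left ac_simps)
  finally show ?thesis .
qed

lemma proj_mult_vector: "proj v *v w = cinner v w *s v"
  by (simp add: proj_def matrix_vector_mult_def cinner_def vec_eq_iff sum_distrib_left
      mult.commute mult.left_commute)

lemma transpose_proj: "transpose (proj v) = proj (vcnj v)"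
  by (simp add: proj_def transpose_def vcnj_def vec_eq_iff mult.commute)

lemma trace_proj: "trace (proj v) = cinner v v"
  by (simp add: trace_def proj_def cinner_def mult.commute)

lemma density_proj:
  assumes "norm v = 1"
  shows "density (proj v)"
proof -
  have "cinner w (proj v *v w) = cinner v w * cnj (cinner v w)" for w
    by (simp add: proj_mult_vector cinner_scale_right cnj_cinner mult.commute)
  then have "Re (cinner w (proj v *v w)) = (cmod (cinner v w))^2" for w
    by (simp flip: complex_norm_square)
  moreover have "cadj (proj v) = proj v"
    by (simp add: cadj_def proj_def vec_eq_iff mult.commute)
  ultimately show ?thesis
    using assms by (simp add: density_def psd_iff_quadratic_form trace_proj cinner_self_eq_1)
qed

lemma trace_transpose: "trace (transpose A) = trace A"
  by (simp add: trace_def transpose_def)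

lemma Lambda_unit_trace:
  "trace \<rho> = 1 \<Longrightarrow> Lambda x \<rho> = (1 - x) *\<^sub>R \<rho> + (x / 2) *\<^sub>R (mat 1 - transpose \<rho>)"
  by (simp add: Lambda_def)

lemma Lambda_entry:
  "Lambda x A $ i $ j =
     of_real (1 - x) * A$i$j + of_real (x / 2) * ((if i = j then trace A else 0) - A$j$i)"
  by (simp add: Lambda_def mat_def transpose_def) (simp add: scaleR_conv_of_real)

lemma linear_Lambda: "linear (Lambda x)"
proof (rule linearI)
  show "Lambda x (A + B) = Lambda x A + Lambda x B" for A B
    by (simp add: vec_eq_iff Lambda_entry trace_add algebra_simps)
  show "Lambda x (r *\<^sub>R A) = r *\<^sub>R Lambda x A" for r A
    by (simp add: vec_eq_iff Lambda_entry trace_scaleR scaleR_complex algebra_simps)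
qed

lemma quadratic_form_Lambda:
  assumes "trace \<rho> = 1"
  shows "Re (cinner u (Lambda x \<rho> *v u)) =
     (1 - x) * Re (cinner u (\<rho> *v u)) + x / 2 * ((norm u)^2 - Re (cinner (vcnj u) (\<rho> *v vcnj u)))"
  by (simp add: Lambda_unit_trace[OF assms] scaleR_matrix_vector_mult cinner_scaleR_right
      matrix_vector_mult_add_rdistrib matrix_vector_mult_diff_rdistrib cinner_add_right
      cinner_diff_right cinner_transpose norm_sq_eq_Re_cinner del: transpose_matrix_vector)

lemma Lambda_quadratic_form_bounds:
  assumes "density \<rho>" and "0 \<le> x" and "x \<le> 1"
  shows "0 \<le> Re (cinner u (Lambda x \<rho> *v u))"
    and "norm u = 1 \<Longrightarrow> Re (cinner u (Lambda x \<rho> *v u)) \<le> 1 - x / 2"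
proof -
  define a where "a = Re (cinner u (\<rho> *v u))"
  define b where "b = Re (cinner (vcnj u) (\<rho> *v vcnj u))"
  have "0 \<le> a" "0 \<le> b"
    using assms(1) by (simp_all add: a_def b_def density_def psd_iff_quadratic_form)
  moreover have "a \<le> (norm u)^2" "b \<le> (norm u)^2"
    using density_quadratic_form_le[OF assms(1), of u] density_quadratic_form_le[OF assms(1), of "vcnj u"]
    by (simp_all add: a_def b_def norm_vcnj)
  moreover have eq: "Re (cinner u (Lambda x \<rho> *v u)) = (1 - x) * a + x / 2 * ((norm u)^2 - b)"
    using assms(1) by (simp add: a_def b_def density_def quadratic_form_Lambda)
  ultimately show "0 \<le> Re (cinner u (Lambda x \<rho> *v u))"
    using assms(2,3) by simp
  assume "norm u = 1"
  with \<open>a \<le> (norm u)^2\<close> \<open>0 \<le> b\<close> have "(1 - x) * a \<le> 1 - x" "x / 2 * (1 - b) \<le> x / 2"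
    using assms(2,3) by (simp_all add: mult_left_le)
  then show "Re (cinner u (Lambda x \<rho> *v u)) \<le> 1 - x / 2"
    using eq \<open>norm u = 1\<close> by simp
qed

lemma density_Lambda:
  assumes "density \<rho>" and "0 \<le> x" and "x \<le> 1"
  shows "density (Lambda x \<rho>)"
proof -
  have "cadj \<rho> = \<rho>" and tr: "trace \<rho> = 1"
    using assms(1) by (simp_all add: density_def psd_def)
  then have "cadj (Lambda x \<rho>) = Lambda x \<rho>"
    by (simp add: Lambda_unit_trace cadj_add cadj_scaleR cadj_diff cadj_mat cadj_transpose)
  moreover have "trace (Lambda x \<rho>) = 1"
    by (simp add: Lambda_unit_trace[OF tr] trace_add trace_sub trace_scaleR trace_transpose trace_I tr
        algebra_simps)
  ultimately show ?thesis
    using Lambda_quadratic_form_bounds(1)[OF assms] by (simp add: density_def psd_iff_quadratic_form)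
qed

lemma Lambda_maximally_mixed: "Lambda x ((1 / 3) *\<^sub>R mat 1) = (1 / 3) *\<^sub>R mat 1"
proof -
  have "trace (mat 1 :: cmat3) = 3" by (simp add: trace_I)
  then show ?thesis
    by (simp add: vec_eq_iff Lambda_entry trace_scaleR)
      (simp add: mat_def scaleR_complex field_simps)
qed

definition binary_entropy :: "real \<Rightarrow> real" where
  "binary_entropy p = - eta p - eta (1 - p)"

lemma vn_entropy_Lambda_ge:
  assumes "density \<rho>" and "0 \<le> x" and "x \<le> 1"
  shows "binary_entropy (x / 2) \<le> vn_entropy (Lambda x \<rho>)"
proof -
  have dens: "density (Lambda x \<rho>)" by (rule density_Lambda[OF assms])
  then have "cadj (Lambda x \<rho>) = Lambda x \<rho>" by (simp add: density_def psd_def)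
  then obtain U l where U: "unitary_mat U" and \<Lambda>: "Lambda x \<rho> = U ** diag_mat l ** cadj U"
    using hermitian_spectral_theorem by blast
  have "0 \<le> l$k \<and> l$k \<le> 1 - x / 2" for k
    using unitary_diagonalization_eigenvalue[OF U \<Lambda>, of k]
      Lambda_quadratic_form_bounds[OF assms, of "column k U"] by simp
  moreover have "(\<Sum>i\<in>UNIV. l$i) = 1" by (rule density_eigenvalues(2)[OF dens U \<Lambda>])
  ultimately have "eta (l$1) + eta (l$2) + eta (l$3) \<le> eta (1 - x / 2) + eta (1 - (1 - x / 2))"
    using assms by (intro eta_sum3_le) (auto simp: sum_3)
  then show ?thesis
    by (simp add: vn_entropy_eq[OF U \<Lambda>] sum_3 binary_entropy_def)
qed

lemma vn_entropy_Lambda_isotropic: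
  fixes \<psi> :: "complex^3"
  assumes unit: "norm \<psi> = 1" and isotropic: "cinner (vcnj \<psi>) \<psi> = 0"
  shows "vn_entropy (Lambda x (proj \<psi>)) = binary_entropy (x / 2)"
proof -
  \<comment> \<open>proj \<phi> is the transpose of proj \<psi>; with a unit w orthogonal to both, \<psi>, \<phi>, w is an
    eigenbasis of Lambda x (proj \<psi>) with eigenvalues 1 - x/2, 0, x/2.\<close>
  define \<phi> where "\<phi> = vcnj \<psi>"
  have \<psi>\<psi>: "cinner \<psi> \<psi> = 1" and \<phi>\<phi>: "cinner \<phi> \<phi> = 1"
    using unit by (simp_all add: \<phi>_def cinner_self_eq_1 norm_vcnj)
  have \<phi>\<psi>: "cinner \<phi> \<psi> = 0" and \<psi>\<phi>: "cinner \<psi> \<phi> = 0"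
    using isotropic cnj_cinner[of \<phi> \<psi>] by (simp_all add: \<phi>_def)
  have "card {\<psi>, \<phi>} < CARD(3)"
    by (cases "\<psi> = \<phi>") simp_all
  then obtain w where ww: "cinner w w = 1" and \<psi>w: "cinner \<psi> w = 0" and \<phi>w: "cinner \<phi> w = 0"
    using exists_unit_orthogonal[of "{\<psi>, \<phi>}"] by auto
  have w\<psi>: "cinner w \<psi> = 0" and w\<phi>: "cinner w \<phi> = 0"
    using \<psi>w \<phi>w cnj_cinner[of \<psi> w] cnj_cinner[of \<phi> w] by simp_all
  have "Lambda x (proj \<psi>) = (1 - x) *\<^sub>R proj \<psi> + (x / 2) *\<^sub>R (mat 1 - proj \<phi>)"
    using \<psi>\<psi> by (simp add: Lambda_unit_trace trace_proj transpose_proj \<phi>_def)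
  then have \<Lambda>: "Lambda x (proj \<psi>) *v v =
      (1 - x) *\<^sub>R (cinner \<psi> v *s \<psi>) + (x / 2) *\<^sub>R (v - cinner \<phi> v *s \<phi>)" for v
    by (simp add: matrix_vector_mult_add_rdistrib matrix_vector_mult_diff_rdistrib
        scaleR_matrix_vector_mult proj_mult_vector)
  define f :: "3 \<Rightarrow> complex^3" where "f j = (if j = 1 then \<psi> else if j = 2 then \<phi> else w)" for j
  define l :: "real^3" where "l = vector [1 - x / 2, 0, x / 2]"
  have "\<forall>j k. cinner (f j) (f k) = (if j = k then 1 else 0)"
    by (simp add: forall_3 f_def \<psi>\<psi> \<phi>\<phi> ww \<phi>\<psi> \<psi>\<phi> \<psi>w \<phi>w w\<psi> w\<phi>)
  moreover have "\<forall>k. Lambda x (proj \<psi>) *v f k = of_real (l$k) *s f k"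
    by (simp add: forall_3 f_def l_def \<Lambda> \<psi>\<psi> \<phi>\<phi> \<phi>\<psi> \<psi>\<phi> \<psi>w \<phi>w vec_eq_iff scaleR_complex
        algebra_simps)
  ultimately obtain U where U: "unitary_mat U" and "Lambda x (proj \<psi>) = U ** diag_mat l ** cadj U"
    using unitary_diagonalization_of_eigenbasis by blast
  then show ?thesis
    by (simp add: vn_entropy_eq sum_3 l_def binary_entropy_def eta_def)
qed

lemma complex_sqrt2_square: "complex_of_real (sqrt 2) * complex_of_real (sqrt 2) = 2"
  by (simp flip: of_real_mult)

definition six_states :: "(complex^3) list" where
  "six_states = [vector [\<i> / sqrt 2, 1 / sqrt 2, 0], vector [- \<i> / sqrt 2, 1 / sqrt 2, 0],
      vector [0, \<i> / sqrt 2, 1 / sqrt 2], vector [0, - \<i> / sqrt 2, 1 / sqrt 2],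
      vector [1 / sqrt 2, 0, \<i> / sqrt 2], vector [1 / sqrt 2, 0, - \<i> / sqrt 2]]"

lemma six_states_isotropic:
  assumes "\<psi> \<in> set six_states"
  shows "norm \<psi> = 1" and "cinner (vcnj \<psi>) \<psi> = 0"
proof -
  have "cinner \<psi> \<psi> = 1 \<and> cinner (vcnj \<psi>) \<psi> = 0"
    using assms by (auto simp: six_states_def cinner_def vcnj_def sum_3 field_simps complex_sqrt2_square)
  then show "norm \<psi> = 1" and "cinner (vcnj \<psi>) \<psi> = 0"
    by (simp_all add: cinner_self_eq_1)
qed

lemma six_states_average:
  "(\<Sum>i<6. (1 / 6) *\<^sub>R proj (six_states ! i)) = ((1 / 3) *\<^sub>R mat 1 :: cmat3)"
proof -
  show ?thesis
    by (simp add: eval_nat_numeral six_states_def vec_eq_iff forall_3 proj_def mat_def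
        scaleR_complex field_simps complex_sqrt2_square)
qed

lemma Lambda_six_states_average:
  "(\<Sum>i<6. (1 / 6) *\<^sub>R Lambda x (proj (six_states ! i))) = (1 / 3) *\<^sub>R mat 1"
proof -
  have "(\<Sum>i<6. (1 / 6) *\<^sub>R Lambda x (proj (six_states ! i))) =
      Lambda x (\<Sum>i<6. (1 / 6) *\<^sub>R proj (six_states ! i))"
    by (simp add: linear_sum[OF linear_Lambda] linear_scale[OF linear_Lambda])
  then show ?thesis
    by (simp add: six_states_average Lambda_maximally_mixed)
qed

lemma min_output_entropy_Lambda:
  assumes "0 \<le> x" and "x \<le> 1"
  shows "is_min {vn_entropy (Lambda x \<rho>) | \<rho>. density \<rho>} (binary_entropy (x / 2))"
proof -
  have "hd six_states \<in> set six_states" by (simp add: six_states_def)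
  note \<psi> = six_states_isotropic[OF this]
  show ?thesis
    using density_proj[OF \<psi>(1)] vn_entropy_Lambda_isotropic[OF \<psi>] vn_entropy_Lambda_ge[OF _ assms]
    unfolding is_min_def by (auto intro!: exI[of _ "proj (hd six_states)"])
qed

lemma holevo_capacity_Lambda:
  assumes "0 \<le> x" and "x \<le> 1"
  shows "is_max (holevo_quantities (Lambda x)) (log 2 3 - binary_entropy (x / 2))"
proof -
  have "log 2 CARD(3) - binary_entropy (x / 2) \<in> holevo_quantities (Lambda x)"
  proof (rule holevo_quantity_uniform_ensemble[where n = 6 and \<rho> = "\<lambda>i. proj (six_states ! i)"])
    fix i :: nat assume "i < 6"
    then have "six_states ! i \<in> set six_states" by (intro nth_mem) (simp add: six_states_def)
    with six_states_isotropic[OF this] show "density (proj (six_states ! i)) \<and>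
        vn_entropy (Lambda x (proj (six_states ! i))) = binary_entropy (x / 2)"
      by (simp add: density_proj vn_entropy_Lambda_isotropic)
  qed (simp_all add: Lambda_six_states_average)
  moreover have "q \<le> log 2 CARD(3) - binary_entropy (x / 2)" if "q \<in> holevo_quantities (Lambda x)" for q
    using holevo_quantity_le[OF density_Lambda[OF _ assms] vn_entropy_Lambda_ge[OF _ assms] that] .
  ultimately show ?thesis by (simp add: is_max_def)
qed

theorem mainTheorem1:
  fixes x :: real
  assumes "0 \<le> x" and "x \<le> 1"
  shows "is_max (holevo_quantities (Lambda x))
           (log 2 3 + x / 2 * log 2 (x / 2) + (1 - x / 2) * log 2 (1 - x / 2))
       \<and> is_min {vn_entropy (Lambda x \<rho>) | \<rho>. density \<rho>}
           (- (x / 2) * log 2 (x / 2) - (1 - x / 2) * log 2 (1 - x / 2))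
       \<and> density (proj (vector [\<i> / sqrt 2, 1 / sqrt 2, 0] :: complex^3))
       \<and> vn_entropy (Lambda x (proj (vector [\<i> / sqrt 2, 1 / sqrt 2, 0] :: complex^3)))
           = - (x / 2) * log 2 (x / 2) - (1 - x / 2) * log 2 (1 - x / 2)"
proof -
  have H: "binary_entropy (x / 2) = - (x / 2) * log 2 (x / 2) - (1 - x / 2) * log 2 (1 - x / 2)"
    by (simp add: binary_entropy_def eta_eq)
  have cap: "log 2 3 + x / 2 * log 2 (x / 2) + (1 - x / 2) * log 2 (1 - x / 2) =
      log 2 3 - binary_entropy (x / 2)"
    by (simp add: H)
  have "(vector [\<i> / sqrt 2, 1 / sqrt 2, 0] :: complex^3) \<in> set six_states"
    by (simp add: six_states_def)
  note \<psi> = six_states_isotropic[OF this]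
  show ?thesis
    unfolding cap H[symmetric]
    using holevo_capacity_Lambda[OF assms] min_output_entropy_Lambda[OF assms]
      density_proj[OF \<psi>(1)] vn_entropy_Lambda_isotropic[OF \<psi>] by blast
qed

end
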